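(* For every pure state $\ket\Psi\in\mathcal H_A\otimes\mathcal H_B\otimes\mathcal H_C$ (finite-dimensional) and every integer $n\ge2$, $Z_n(A:B:C)_{\ket\Psi}$ is a real number with $|Z_n(A:B:C)_{\ket\Psi}|\le1$, and $Z_n(A:B:C)_{\ket\Psi}$ is invariant under permuting the roles of the subsystems $A,B,C$ (e.g. $Z_n(A:B:C)=Z_n(B:A:C)=Z_n(C:B:A)$).
   Context: For a subsystem $X$ and $\pi\in S_N$, $\pi_X$ permutes the $N$ copies of $\mathcal H_X$ according to $\pi$ and acts trivially otherwise. For integer $n\ge2$, arrange $1,\dots,n^2$ in an $n\times n$ array row by row; $\pi^{(1)}\in S_{n^2}$ is the product of the $n$ cycles $(kn+1,\dots,kn+n)$, $k=0,\dots,n-1$ (cycling each row), and $\pi^{(2)}\in S_{n^2}$ is the product of the $n$ cycles $(j,n+j,\dots,(n-1)n+j)$, $j=1,\dots,n$ (cycling each column). $Z_n(A:B:C)_{\ket\Psi}=\bra\Psi^{\otimes n^2}(\pi^{(1)}_A\otimes\pi^{(2)}_B\otimes\mathrm{id}_C)\ket\Psi^{\otimes n^2}$; $Z_n(B:A:C)$ denotes the same expression with the roles of $A$ and $B$ exchanged, etc. *)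

theory Defs
  imports "HOL-Analysis.Analysis"
begin

text \<open>A (normalized) pure state on H_A (x) H_B (x) H_C, with finite-dimensional
  factors given by finite index types 'a, 'b, 'c (computational bases); the state is
  its vector of amplitudes.\<close>
definition pure_state :: "('a::finite \<times> 'b::finite \<times> 'c::finite \<Rightarrow> complex) \<Rightarrow> bool" where
  "pure_state psi \<longleftrightarrow> (\<Sum>x\<in>UNIV. (cmod (psi x))\<^sup>2) = 1"

text \<open>Copies are indexed by 0,...,N-1 (paper: 1,...,N). The operator
  pA_A (x) pB_B (x) pC_C sends copy k of each subsystem to copy p(k), i.e. it maps the
  basis vector with local labels x_k to the one with labels x_(p^-1(k)); hence
  (pi Phi)(x) = Phi(x o p) componentwise.  This gives
  < Psi^(x)N | pA_A (x) pB_B (x) pC_C | Psi^(x)N >.\<close>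
definition perm_expect ::
  "nat \<Rightarrow> ('a::finite \<times> 'b::finite \<times> 'c::finite \<Rightarrow> complex)
     \<Rightarrow> (nat \<Rightarrow> nat) \<Rightarrow> (nat \<Rightarrow> nat) \<Rightarrow> (nat \<Rightarrow> nat) \<Rightarrow> complex" where
  "perm_expect N psi pA pB pC =
     (\<Sum>x\<in>PiE {..<N} (\<lambda>_. UNIV).
        cnj (\<Prod>k<N. psi (x k)) *
        (\<Prod>k<N. psi (fst (x (pA k)), fst (snd (x (pB k))), snd (snd (x (pC k))))))"

text \<open>0-based version of the n x n array: position k*n+j (row k, column j).
  pi1 cycles each row (kn+j -> kn+(j+1 mod n)), pi2 cycles each column
  (kn+j -> ((k+1) mod n) n + j). Identity outside {0..<n^2} (irrelevant).\<close>
definition pi1 :: "nat \<Rightarrow> nat \<Rightarrow> nat" where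
  "pi1 n i = (if i < n^2 then (i div n) * n + (Suc (i mod n)) mod n else i)"

definition pi2 :: "nat \<Rightarrow> nat \<Rightarrow> nat" where
  "pi2 n i = (if i < n^2 then ((Suc (i div n)) mod n) * n + i mod n else i)"

text \<open>Z_n(X:Y:Z) puts pi1 on X, pi2 on Y, id on Z. Below we give the permutation
  acting on A, B, C respectively.\<close>
definition Z_ABC :: "nat \<Rightarrow> ('a::finite \<times> 'b::finite \<times> 'c::finite \<Rightarrow> complex) \<Rightarrow> complex" where
  "Z_ABC n psi = perm_expect (n^2) psi (pi1 n) (pi2 n) id"
definition Z_BAC :: "nat \<Rightarrow> ('a::finite \<times> 'b::finite \<times> 'c::finite \<Rightarrow> complex) \<Rightarrow> complex" where
  "Z_BAC n psi = perm_expect (n^2) psi (pi2 n) (pi1 n) id"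
definition Z_ACB :: "nat \<Rightarrow> ('a::finite \<times> 'b::finite \<times> 'c::finite \<Rightarrow> complex) \<Rightarrow> complex" where
  "Z_ACB n psi = perm_expect (n^2) psi (pi1 n) id (pi2 n)"
definition Z_CAB :: "nat \<Rightarrow> ('a::finite \<times> 'b::finite \<times> 'c::finite \<Rightarrow> complex) \<Rightarrow> complex" where
  "Z_CAB n psi = perm_expect (n^2) psi (pi2 n) id (pi1 n)"
definition Z_BCA :: "nat \<Rightarrow> ('a::finite \<times> 'b::finite \<times> 'c::finite \<Rightarrow> complex) \<Rightarrow> complex" where
  "Z_BCA n psi = perm_expect (n^2) psi id (pi1 n) (pi2 n)"
definition Z_CBA :: "nat \<Rightarrow> ('a::finite \<times> 'b::finite \<times> 'c::finite \<Rightarrow> complex) \<Rightarrow> complex" where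
  "Z_CBA n psi = perm_expect (n^2) psi id (pi2 n) (pi1 n)"

end

theory Submission
  imports Defs
begin

text \<open>Index the \<open>N = n\<^sup>2\<close> copies by the points of the torus \<open>(\<int>/n\<int>)\<^sup>2\<close>; then
  \<open>pi1\<close>, \<open>pi2\<close> and \<open>id\<close> are the translations by \<open>(0,1)\<close>, \<open>(1,0)\<close> and \<open>(0,0)\<close>.
  The expectation of \<open>p\<^sub>A \<otimes> p\<^sub>B \<otimes> p\<^sub>C\<close> in the state \<open>\<Psi>\<^sup>\<otimes>\<^sup>N\<close> does not change
  when every \<open>p\<^sub>X\<close> is replaced by \<open>t \<circ> p\<^sub>X \<circ> s\<close> for fixed permutations \<open>t, s\<close> of the
  copies (\<open>s\<close> reorders the product over the copies, \<open>t\<close> the sum over basis states).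
  Conjugating translations by a unimodular affine map of the torus gives translations again,
  so \<open>Z\<^sub>n\<close> depends on the three translation vectors only up to such maps, and every
  permutation of \<open>(0,1), (1,0), (0,0)\<close> is realized by one. Inverting all three
  permutations conjugates the expectation and is realized by \<open>p \<mapsto> -p\<close>, so \<open>Z\<^sub>n\<close> is
  real. The bound is Cauchy--Schwarz.\<close>

abbreviation configs :: "nat \<Rightarrow> (nat \<Rightarrow> 'a::finite \<times> 'b::finite \<times> 'c::finite) set" where
  "configs N \<equiv> PiE {..<N} (\<lambda>_. UNIV)"

definition perm_amplitude ::
  "nat \<Rightarrow> ('a::finite \<times> 'b::finite \<times> 'c::finite \<Rightarrow> complex)
     \<Rightarrow> (nat \<Rightarrow> nat) \<Rightarrow> (nat \<Rightarrow> nat) \<Rightarrow> (nat \<Rightarrow> nat) \<Rightarrow> (nat \<Rightarrow> 'a \<times> 'b \<times> 'c) \<Rightarrow> complex" where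
  "perm_amplitude N psi pA pB pC x =
     (\<Prod>k<N. psi (fst (x (pA k)), fst (snd (x (pB k))), snd (snd (x (pC k)))))"

definition mix_copies ::
  "nat \<Rightarrow> (nat \<Rightarrow> nat) \<Rightarrow> (nat \<Rightarrow> nat) \<Rightarrow> (nat \<Rightarrow> nat) \<Rightarrow> (nat \<Rightarrow> 'a \<times> 'b \<times> 'c) \<Rightarrow> nat \<Rightarrow> 'a \<times> 'b \<times> 'c" where
  "mix_copies N qA qB qC x =
     restrict (\<lambda>k. (fst (x (qA k)), fst (snd (x (qB k))), snd (snd (x (qC k))))) {..<N}"

lemma perm_expect_eq_sum_amplitudes:
  "perm_expect N psi pA pB pC =
     (\<Sum>x\<in>configs N. cnj (perm_amplitude N psi id id id x) * perm_amplitude N psi pA pB pC x)"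
  unfolding perm_expect_def perm_amplitude_def by simp

lemma perm_amplitude_cong:
  assumes "\<And>k. k < N \<Longrightarrow> pA k = qA k" "\<And>k. k < N \<Longrightarrow> pB k = qB k" "\<And>k. k < N \<Longrightarrow> pC k = qC k"
  shows "perm_amplitude N psi pA pB pC x = perm_amplitude N psi qA qB qC x"
  unfolding perm_amplitude_def by (rule prod.cong) (auto simp: assms)

lemma perm_amplitude_reindex:
  assumes "bij_betw s {..<N} {..<N}"
  shows "perm_amplitude N psi (pA \<circ> s) (pB \<circ> s) (pC \<circ> s) x = perm_amplitude N psi pA pB pC x"
  unfolding perm_amplitude_def
  using prod.reindex_bij_betw[OF assms,
      of "\<lambda>k. psi (fst (x (pA k)), fst (snd (x (pB k))), snd (snd (x (pC k))))"]
  by simp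

lemma perm_amplitude_mix_copies:
  assumes "\<And>k. k < N \<Longrightarrow> pA k < N" "\<And>k. k < N \<Longrightarrow> pB k < N" "\<And>k. k < N \<Longrightarrow> pC k < N"
  shows "perm_amplitude N psi pA pB pC (mix_copies N qA qB qC x) =
         perm_amplitude N psi (qA \<circ> pA) (qB \<circ> pB) (qC \<circ> pC) x"
  unfolding perm_amplitude_def mix_copies_def by (rule prod.cong) (auto simp: assms)

lemma mix_copies_in_configs: "mix_copies N qA qB qC x \<in> configs N"
  unfolding mix_copies_def by simp

lemma mix_copies_mix_copies:
  assumes "\<And>k. k < N \<Longrightarrow> pA k < N" "\<And>k. k < N \<Longrightarrow> pB k < N" "\<And>k. k < N \<Longrightarrow> pC k < N"
  shows "mix_copies N pA pB pC (mix_copies N qA qB qC x) = mix_copies N (qA \<circ> pA) (qB \<circ> pB) (qC \<circ> pC) x"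
  unfolding mix_copies_def using assms by auto

lemma mix_copies_id:
  assumes "x \<in> configs N"
    and "\<And>k. k < N \<Longrightarrow> pA k = k" "\<And>k. k < N \<Longrightarrow> pB k = k" "\<And>k. k < N \<Longrightarrow> pC k = k"
  shows "mix_copies N pA pB pC x = x"
  using assms unfolding mix_copies_def by (auto simp: PiE_iff extensional_def)

lemma bij_betw_mix_copies:
  assumes "bij_betw qA {..<N} {..<N}" "bij_betw qB {..<N} {..<N}" "bij_betw qC {..<N} {..<N}"
  shows "bij_betw (mix_copies N qA qB qC) (configs N) (configs N)"
proof -
  let ?inv = "\<lambda>q. inv_into {..<N} q"
  have into: "q k < N" "?inv q k < N" if "bij_betw q {..<N} {..<N}" "k < N" for q k
    using that by (auto simp: bij_betw_def) (metis inv_into_into lessThan_iff)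
  have cancel: "?inv q (q k) = k" "q (?inv q k) = k" if "bij_betw q {..<N} {..<N}" "k < N" for q k
    using that by (auto simp: bij_betw_inv_into_left bij_betw_inv_into_right)
  show ?thesis
  proof (rule bij_betw_byWitness[where f' = "mix_copies N (?inv qA) (?inv qB) (?inv qC)"])
    show "\<forall>x\<in>configs N. mix_copies N (?inv qA) (?inv qB) (?inv qC) (mix_copies N qA qB qC x) = x"
      using assms by (simp add: mix_copies_mix_copies into mix_copies_id cancel)
    show "\<forall>x\<in>configs N. mix_copies N qA qB qC (mix_copies N (?inv qA) (?inv qB) (?inv qC) x) = x"
      using assms by (simp add: mix_copies_mix_copies into mix_copies_id cancel)
  qed (simp_all add: image_subset_iff mix_copies_in_configs)
qed

lemma perm_expect_cong:
  assumes "\<And>k. k < N \<Longrightarrow> pA k = qA k" "\<And>k. k < N \<Longrightarrow> pB k = qB k" "\<And>k. k < N \<Longrightarrow> pC k = qC k"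
  shows "perm_expect N psi pA pB pC = perm_expect N psi qA qB qC"
  unfolding perm_expect_eq_sum_amplitudes
  by (simp add: perm_amplitude_cong[of N pA qA pB qB pC qC] assms)

lemma perm_expect_reindex_copies:
  assumes "bij_betw qA {..<N} {..<N}" "bij_betw qB {..<N} {..<N}" "bij_betw qC {..<N} {..<N}"
    and "\<And>k. k < N \<Longrightarrow> pA k < N" "\<And>k. k < N \<Longrightarrow> pB k < N" "\<And>k. k < N \<Longrightarrow> pC k < N"
  shows "perm_expect N psi pA pB pC =
    (\<Sum>x\<in>configs N. cnj (perm_amplitude N psi qA qB qC x) *
                      perm_amplitude N psi (qA \<circ> pA) (qB \<circ> pB) (qC \<circ> pC) x)"
proof -
  have into: "q k < N" if "bij_betw q {..<N} {..<N}" "k < N" for q k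
    using that by (auto simp: bij_betw_def)
  have "perm_expect N psi pA pB pC =
    (\<Sum>x\<in>configs N. cnj (perm_amplitude N psi id id id (mix_copies N qA qB qC x)) *
                      perm_amplitude N psi pA pB pC (mix_copies N qA qB qC x))"
    unfolding perm_expect_eq_sum_amplitudes
    by (rule sum.reindex_bij_betw[OF bij_betw_mix_copies[OF assms(1-3)], symmetric])
  then show ?thesis
    using assms by (simp add: perm_amplitude_mix_copies into)
qed

lemma perm_expect_relabel:
  assumes t: "bij_betw t {..<N} {..<N}" and s: "bij_betw s {..<N} {..<N}"
    and "\<And>k. k < N \<Longrightarrow> pA k < N" "\<And>k. k < N \<Longrightarrow> pB k < N" "\<And>k. k < N \<Longrightarrow> pC k < N"
  shows "perm_expect N psi (t \<circ> pA \<circ> s) (t \<circ> pB \<circ> s) (t \<circ> pC \<circ> s) = perm_expect N psi pA pB pC"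
proof -
  have "perm_amplitude N psi t t t x = perm_amplitude N psi id id id x" for x
    using perm_amplitude_reindex[OF t, where pA = id and pB = id and pC = id] by simp
  then have "perm_expect N psi pA pB pC =
    (\<Sum>x\<in>configs N. cnj (perm_amplitude N psi id id id x) *
                      perm_amplitude N psi (t \<circ> pA) (t \<circ> pB) (t \<circ> pC) x)"
    using perm_expect_reindex_copies[where psi = psi and pA = pA and pB = pB and pC = pC,
        OF t t t assms(3-5)]
    by simp
  also have "\<dots> = perm_expect N psi (t \<circ> pA \<circ> s) (t \<circ> pB \<circ> s) (t \<circ> pC \<circ> s)"
    unfolding perm_expect_eq_sum_amplitudes perm_amplitude_reindex[OF s] ..
  finally show ?thesis by simp
qed

lemma perm_expect_inverse:
  assumes "bij_betw qA {..<N} {..<N}" "bij_betw qB {..<N} {..<N}" "bij_betw qC {..<N} {..<N}"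
    and "\<And>k. k < N \<Longrightarrow> pA k < N" "\<And>k. k < N \<Longrightarrow> pB k < N" "\<And>k. k < N \<Longrightarrow> pC k < N"
    and "\<And>k. k < N \<Longrightarrow> qA (pA k) = k" "\<And>k. k < N \<Longrightarrow> qB (pB k) = k" "\<And>k. k < N \<Longrightarrow> qC (pC k) = k"
  shows "perm_expect N psi qA qB qC = cnj (perm_expect N psi pA pB pC)"
proof -
  have "perm_amplitude N psi (qA \<circ> pA) (qB \<circ> pB) (qC \<circ> pC) x = perm_amplitude N psi id id id x" for x
    by (rule perm_amplitude_cong) (simp_all add: assms(7-9))
  then have "perm_expect N psi pA pB pC =
    (\<Sum>x\<in>configs N. cnj (perm_amplitude N psi qA qB qC x) * perm_amplitude N psi id id id x)"
    using perm_expect_reindex_copies[where psi = psi and pA = pA and pB = pB and pC = pC,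
        OF assms(1-6)]
    by simp
  then show ?thesis
    unfolding perm_expect_eq_sum_amplitudes by (simp add: mult.commute)
qed

lemma perm_amplitude_norm:
  assumes "pure_state psi"
  shows "(\<Sum>x\<in>configs N. (cmod (perm_amplitude N psi id id id x))\<^sup>2) = 1"
proof -
  have "(\<Sum>x\<in>configs N. (cmod (perm_amplitude N psi id id id x))\<^sup>2) =
        (\<Sum>x\<in>configs N. \<Prod>k<N. (cmod (psi (x k)))\<^sup>2)"
    unfolding perm_amplitude_def by (simp add: prod_norm[symmetric] prod_power_distrib)
  also have "\<dots> = (\<Prod>k<N. \<Sum>v\<in>UNIV. (cmod (psi v))\<^sup>2)"
    by (rule prod_sum_PiE[symmetric]) auto
  finally show ?thesis using assms unfolding pure_state_def by simp
qed

text \<open>Termwise \<open>|\<langle>u, v\<rangle>| \<le> (\<parallel>u\<parallel>\<^sup>2 + \<parallel>v\<parallel>\<^sup>2) / 2\<close>, where \<open>v\<close>, a coordinate permutation of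
  the unit vector \<open>u\<close>, is again a unit vector.\<close>
lemma norm_perm_expect_le_1:
  assumes psi: "pure_state psi"
    and "bij_betw pA {..<N} {..<N}" "bij_betw pB {..<N} {..<N}" "bij_betw pC {..<N} {..<N}"
  shows "cmod (perm_expect N psi pA pB pC) \<le> 1"
proof -
  let ?u = "perm_amplitude N psi id id id" and ?v = "perm_amplitude N psi pA pB pC"
  have into: "\<And>k. k < N \<Longrightarrow> p k < N" if "bij_betw p {..<N} {..<N}" for p
    using that by (auto simp: bij_betw_def)
  have "?v x = ?u (mix_copies N pA pB pC x)" for x
    using assms(2-4) by (simp add: perm_amplitude_mix_copies into)
  then have norm_v: "(\<Sum>x\<in>configs N. (cmod (?v x))\<^sup>2) = 1"
    using sum.reindex_bij_betw[OF bij_betw_mix_copies[OF assms(2-4)], of "\<lambda>y. (cmod (?u y))\<^sup>2"]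
      perm_amplitude_norm[OF psi]
    by simp
  have "cmod (perm_expect N psi pA pB pC) \<le> (\<Sum>x\<in>configs N. cmod (cnj (?u x) * ?v x))"
    unfolding perm_expect_eq_sum_amplitudes by (rule norm_sum)
  also have "\<dots> \<le> (\<Sum>x\<in>configs N. ((cmod (?u x))\<^sup>2 + (cmod (?v x))\<^sup>2) / 2)"
  proof (rule sum_mono)
    fix x
    have "0 \<le> (cmod (?u x) - cmod (?v x))\<^sup>2" by simp
    then show "cmod (cnj (?u x) * ?v x) \<le> ((cmod (?u x))\<^sup>2 + (cmod (?v x))\<^sup>2) / 2"
      by (simp add: norm_mult power2_eq_square algebra_simps)
  qed
  also have "\<dots> = 1"
    using perm_amplitude_norm[OF psi, of N] norm_v
    by (simp add: sum_divide_distrib[symmetric] sum.distrib)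
  finally show ?thesis .
qed

definition cell :: "nat \<Rightarrow> int \<times> int \<Rightarrow> nat" where
  "cell n p = nat (fst p mod int n) * n + nat (snd p mod int n)"

definition coords :: "nat \<Rightarrow> nat \<Rightarrow> int \<times> int" where
  "coords n i = (int (i div n), int (i mod n))"

definition grid_map :: "nat \<Rightarrow> (int \<times> int \<Rightarrow> int \<times> int) \<Rightarrow> nat \<Rightarrow> nat" where
  "grid_map n f i = cell n (f (coords n i))"

definition affine2 :: "int \<Rightarrow> int \<Rightarrow> int \<Rightarrow> int \<Rightarrow> int \<times> int \<Rightarrow> int \<times> int \<Rightarrow> int \<times> int" where
  "affine2 a b c d w p = (a * fst p + b * snd p + fst w, c * fst p + d * snd p + snd w)"

lemma cell_less:
  assumes "0 < n"
  shows "cell n p < n\<^sup>2"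
proof -
  have r: "nat (fst p mod int n) < n" and c: "nat (snd p mod int n) < n"
    using assms by (simp_all add: nat_less_iff)
  have "cell n p < (nat (fst p mod int n) + 1) * n"
    unfolding cell_def using c by simp
  also have "\<dots> \<le> n * n"
    using r by (intro mult_right_mono) auto
  finally show ?thesis by (simp add: power2_eq_square)
qed

lemma grid_map_less: "0 < n \<Longrightarrow> grid_map n f i < n\<^sup>2"
  unfolding grid_map_def by (rule cell_less)

lemma coords_cell:
  assumes "0 < n"
  shows "coords n (cell n p) = (fst p mod int n, snd p mod int n)"
proof -
  have "nat (snd p mod int n) < n" using assms by (simp add: nat_less_iff)
  then show ?thesis unfolding cell_def coords_def using assms by simp
qed

lemma cell_coords:
  assumes "i < n\<^sup>2"
  shows "cell n (coords n i) = i"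
proof -
  have "i div n < n" using assms by (simp add: less_mult_imp_div_less power2_eq_square)
  then show ?thesis unfolding cell_def coords_def by (simp flip: of_nat_mod)
qed

lemma cell_affine2_mod:
  "cell n (affine2 a b c d w (fst p mod int n, snd p mod int n)) = cell n (affine2 a b c d w p)"
proof -
  have "(a * (x mod m) + b * (y mod m) + e) mod m = (a * x + b * y + e) mod m" for a b e x y m :: int
    by (rule mod_add_cong[OF mod_add_cong[OF mod_mult_right_eq mod_mult_right_eq] refl])
  then show ?thesis unfolding cell_def affine2_def by simp
qed

lemma grid_map_affine2_comp:
  assumes "0 < n"
  shows "grid_map n (affine2 a b c d w) (grid_map n g i) = grid_map n (affine2 a b c d w \<circ> g) i"
  unfolding grid_map_def coords_cell[OF assms] cell_affine2_mod by simp

lemma grid_map_id: "i < n\<^sup>2 \<Longrightarrow> grid_map n id i = i"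
  unfolding grid_map_def by (simp add: cell_coords)

lemma bij_betw_grid_map_affine2:
  assumes "0 < n"
    and "\<And>p. affine2 a' b' c' d' w' (affine2 a b c d w p) = p"
    and "\<And>p. affine2 a b c d w (affine2 a' b' c' d' w' p) = p"
  shows "bij_betw (grid_map n (affine2 a b c d w)) {..<n\<^sup>2} {..<n\<^sup>2}"
proof (rule bij_betw_byWitness[where f' = "grid_map n (affine2 a' b' c' d' w')"])
  have "affine2 a' b' c' d' w' \<circ> affine2 a b c d w = id" "affine2 a b c d w \<circ> affine2 a' b' c' d' w' = id"
    using assms(2,3) by auto
  then show "\<forall>i\<in>{..<n\<^sup>2}. grid_map n (affine2 a' b' c' d' w') (grid_map n (affine2 a b c d w) i) = i"
    "\<forall>i\<in>{..<n\<^sup>2}. grid_map n (affine2 a b c d w) (grid_map n (affine2 a' b' c' d' w') i) = i"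
    by (simp_all add: grid_map_affine2_comp[OF assms(1)] grid_map_id)
qed (auto simp: grid_map_less[OF assms(1)])

definition Z_grid ::
  "nat \<Rightarrow> ('a::finite \<times> 'b::finite \<times> 'c::finite \<Rightarrow> complex)
     \<Rightarrow> int \<times> int \<Rightarrow> int \<times> int \<Rightarrow> int \<times> int \<Rightarrow> complex" where
  "Z_grid n psi uA uB uC =
     perm_expect (n\<^sup>2) psi (grid_map n (affine2 1 0 0 1 uA)) (grid_map n (affine2 1 0 0 1 uB))
       (grid_map n (affine2 1 0 0 1 uC))"

lemma bij_betw_grid_map_translation:
  "0 < n \<Longrightarrow> bij_betw (grid_map n (affine2 1 0 0 1 u)) {..<n\<^sup>2} {..<n\<^sup>2}"
  by (rule bij_betw_grid_map_affine2[where a' = 1 and b' = 0 and c' = 0 and d' = 1 and w' = "- u"])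
    (simp_all add: affine2_def)

lemma Z_grid_affine_invariant:
  assumes n: "0 < n" and det: "\<bar>a * d - b * c\<bar> = 1"
  shows "Z_grid n psi (affine2 a b c d w uA) (affine2 a b c d w uB) (affine2 a b c d w uC) =
         Z_grid n psi uA uB uC"
proof -
  define e where "e = a * d - b * c"
  have e: "e * (a * d - b * c) = 1"
    using det unfolding e_def by (metis abs_mult_self_eq mult_1)
  let ?L = "affine2 a b c d 0" and ?L' = "affine2 (e * d) (- (e * b)) (- (e * c)) (e * a)"
  have L_L': "?L (?L' 0 p) = p" "?L' 0 (?L p) = p" for p
    using e by (auto simp: affine2_def intro!: prod_eqI; algebra)+
  have t: "bij_betw (grid_map n ?L) {..<n\<^sup>2} {..<n\<^sup>2}"
    by (rule bij_betw_grid_map_affine2[OF n]) (rule L_L')+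
  have s: "bij_betw (grid_map n (?L' (?L' 0 w))) {..<n\<^sup>2} {..<n\<^sup>2}"
    by (rule bij_betw_grid_map_affine2[where a' = a and b' = b and c' = c and d' = d and w' = "- w", OF n])
      (use e in \<open>auto simp: affine2_def intro!: prod_eqI; algebra\<close>)+
  have comp: "?L \<circ> affine2 1 0 0 1 u \<circ> ?L' (?L' 0 w) = affine2 1 0 0 1 (affine2 a b c d w u)" for u
    using e by (auto simp: affine2_def intro!: ext prod_eqI; algebra)
  have conj: "grid_map n (affine2 1 0 0 1 (affine2 a b c d w u)) =
      grid_map n ?L \<circ> grid_map n (affine2 1 0 0 1 u) \<circ> grid_map n (?L' (?L' 0 w))" for u
  proof
    fix i
    have "(grid_map n ?L \<circ> grid_map n (affine2 1 0 0 1 u) \<circ> grid_map n (?L' (?L' 0 w))) i =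
          grid_map n (?L \<circ> affine2 1 0 0 1 u \<circ> ?L' (?L' 0 w)) i"
      by (simp add: grid_map_affine2_comp[OF n] o_assoc)
    then show "grid_map n (affine2 1 0 0 1 (affine2 a b c d w u)) i =
        (grid_map n ?L \<circ> grid_map n (affine2 1 0 0 1 u) \<circ> grid_map n (?L' (?L' 0 w))) i"
      by (simp only: comp)
  qed
  show ?thesis
    unfolding Z_grid_def conj by (rule perm_expect_relabel[OF t s]) (simp_all add: grid_map_less[OF n])
qed

lemma Z_grid_uminus:
  assumes n: "0 < n"
  shows "Z_grid n psi (- uA) (- uB) (- uC) = cnj (Z_grid n psi uA uB uC)"
proof -
  have "grid_map n (affine2 1 0 0 1 (- u)) (grid_map n (affine2 1 0 0 1 u) i) = i" if "i < n\<^sup>2" for u i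
  proof -
    have "affine2 1 0 0 1 (- u) \<circ> affine2 1 0 0 1 u = id" by (auto simp: affine2_def)
    then show ?thesis using that by (simp add: grid_map_affine2_comp[OF n] grid_map_id)
  qed
  then show ?thesis
    unfolding Z_grid_def
    by (intro perm_expect_inverse bij_betw_grid_map_translation[OF n] grid_map_less[OF n])
qed

lemma Z_grid_real:
  assumes "0 < n"
  shows "Z_grid n psi uA uB uC \<in> \<real>"
proof -
  have "affine2 (- 1) 0 0 (- 1) 0 u = - u" for u by (simp add: affine2_def prod_eq_iff)
  then have "Z_grid n psi (- uA) (- uB) (- uC) = Z_grid n psi uA uB uC"
    using Z_grid_affine_invariant[OF assms, where a = "- 1" and b = 0 and c = 0 and d = "- 1" and w = 0]
    by simp
  then show ?thesis
    unfolding Reals_cnj_iff Z_grid_uminus[OF assms] .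
qed

lemma norm_Z_grid_le_1:
  "pure_state psi \<Longrightarrow> 0 < n \<Longrightarrow> cmod (Z_grid n psi uA uB uC) \<le> 1"
  unfolding Z_grid_def by (intro norm_perm_expect_le_1 bij_betw_grid_map_translation)

lemma Z_eq_Z_grid:
  assumes n: "0 < n"
  shows "Z_ABC n psi = Z_grid n psi (0, 1) (1, 0) (0, 0)"
    and "Z_BAC n psi = Z_grid n psi (1, 0) (0, 1) (0, 0)"
    and "Z_ACB n psi = Z_grid n psi (0, 1) (0, 0) (1, 0)"
    and "Z_CAB n psi = Z_grid n psi (1, 0) (0, 0) (0, 1)"
    and "Z_BCA n psi = Z_grid n psi (0, 0) (0, 1) (1, 0)"
    and "Z_CBA n psi = Z_grid n psi (0, 0) (1, 0) (0, 1)"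
proof -
  have "i div n < n" if "i < n\<^sup>2" for i
    using that by (simp add: less_mult_imp_div_less power2_eq_square)
  then have "pi1 n i = grid_map n (affine2 1 0 0 1 (0, 1)) i"
      and "pi2 n i = grid_map n (affine2 1 0 0 1 (1, 0)) i"
      and "id i = grid_map n (affine2 1 0 0 1 (0, 0)) i" if "i < n\<^sup>2" for i
    using that n
    by (auto simp: pi1_def pi2_def grid_map_def cell_def coords_def affine2_def
        nat_mod_distrib nat_add_distrib)
  then show "Z_ABC n psi = Z_grid n psi (0, 1) (1, 0) (0, 0)"
    and "Z_BAC n psi = Z_grid n psi (1, 0) (0, 1) (0, 0)"
    and "Z_ACB n psi = Z_grid n psi (0, 1) (0, 0) (1, 0)"
    and "Z_CAB n psi = Z_grid n psi (1, 0) (0, 0) (0, 1)"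
    and "Z_BCA n psi = Z_grid n psi (0, 0) (0, 1) (1, 0)"
    and "Z_CBA n psi = Z_grid n psi (0, 0) (1, 0) (0, 1)"
    unfolding Z_ABC_def Z_BAC_def Z_ACB_def Z_CAB_def Z_BCA_def Z_CBA_def Z_grid_def
    by (auto intro!: perm_expect_cong)
qed

theorem mainTheorem10:
  fixes psi :: "'a::finite \<times> 'b::finite \<times> 'c::finite \<Rightarrow> complex" and n :: nat
  assumes "pure_state psi" and "n \<ge> 2"
  shows "Z_ABC n psi \<in> \<real> \<and> cmod (Z_ABC n psi) \<le> 1 \<and>
         Z_BAC n psi = Z_ABC n psi \<and> Z_ACB n psi = Z_ABC n psi \<and>
         Z_CAB n psi = Z_ABC n psi \<and> Z_BCA n psi = Z_ABC n psi \<and>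
         Z_CBA n psi = Z_ABC n psi"
proof -
  have n: "0 < n" using assms(2) by simp
  define Z where "Z = Z_grid n psi (0, 1) (1, 0) (0, 0)"
  have moved: "Z_grid n psi (affine2 a b c d w (0, 1)) (affine2 a b c d w (1, 0))
      (affine2 a b c d w (0, 0)) = Z"
    if "\<bar>a * d - b * c\<bar> = 1" for a b c d w
    unfolding Z_def by (rule Z_grid_affine_invariant[OF n that])
  have "Z_BAC n psi = Z"
    using moved[where a = 0 and b = 1 and c = 1 and d = 0 and w = 0]
    by (simp add: Z_eq_Z_grid[OF n] affine2_def)
  moreover have "Z_ACB n psi = Z"
    using moved[where a = "- 1" and b = "- 1" and c = 0 and d = 1 and w = "(1, 0)"]
    by (simp add: Z_eq_Z_grid[OF n] affine2_def)
  moreover have "Z_CAB n psi = Z"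
    using moved[where a = 0 and b = 1 and c = "- 1" and d = "- 1" and w = "(0, 1)"]
    by (simp add: Z_eq_Z_grid[OF n] affine2_def)
  moreover have "Z_BCA n psi = Z"
    using moved[where a = "- 1" and b = "- 1" and c = 1 and d = 0 and w = "(1, 0)"]
    by (simp add: Z_eq_Z_grid[OF n] affine2_def)
  moreover have "Z_CBA n psi = Z"
    using moved[where a = 1 and b = 0 and c = "- 1" and d = "- 1" and w = "(0, 1)"]
    by (simp add: Z_eq_Z_grid[OF n] affine2_def)
  moreover have "Z_ABC n psi = Z" unfolding Z_def by (rule Z_eq_Z_grid[OF n])
  ultimately show ?thesis
    using Z_grid_real[OF n] norm_Z_grid_le_1[OF assms(1) n] by (simp add: Z_def)
qed

end
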